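(* Let $X$ be a real Banach space such that $X^*$ has the Radon–Nikodym property (in the sense below), and let $g:X^*\to\mathbb{R}\cup\{+\infty\}$ be a proper convex weak$^*$-lower semicontinuous function which is $w^*$-epi-pointed, i.e. $\operatorname{int}(\operatorname{dom}(g^*|_X))\neq\emptyset$. Then $w^*\text{-}\mathrm{Exp}\,g$ is norm-dense in $\operatorname{int}(\operatorname{dom}(g^*|_X))$.
   Context: $\operatorname{dom} g=\{g<+\infty\}$; proper means $g>-\infty$ everywhere and $\operatorname{dom} g\ne\emptyset$. $g^*|_X:X\to(-\infty,+\infty]$ is $g^*(x)=\sup_{x^*\in X^*}(\langle x^*,x\rangle-g(x^* ))$; interiors in $X$ are for the norm topology. For a nonempty closed convex $C\subset X^*\times\mathbb{R}$ (dual of $X\times\mathbb{R}$), with $\sigma_C(u)=\sup_{c\in C}\langle c,u\rangle$ for $u\in X\times\mathbb{R}$: a point $c_0\in C$ is $w^*$-strongly exposed by $u\in X\times\mathbb{R}$ if for every sequence $(c_n)\subset C$, $\langle c_n,u\rangle\to\sigma_C(u)$ implies $c_n\to c_0$ in norm. A point $x^*\in\operatorname{dom} g$ is a $w^*$-strongly exposed point of $g$ ($x^*\in w^*\text{-}\mathrm{exp}\,g$) if $(x^*,g(x^* ))$ is a $w^*$-strongly exposed point of $\operatorname{epi} g=\{(y^*,r):r\ge g(y^* )\}$. For such $x^*$, $w^*\text{-}\mathrm{Exp}(g,x^* )$ is the set of $x\in X$ such that $(x,-1)$ $w^*$-strongly exposes $(x^*,g(x^* ))$ in $\operatorname{epi}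 g$, and $w^*\text{-}\mathrm{Exp}\,g=\bigcup_{x^*\in w^*\text{-}\mathrm{exp}\,g}w^*\text{-}\mathrm{Exp}(g,x^* )$. $X^*$ has the Radon–Nikodym property if every nonempty weak$^*$-compact convex $K\subset X^*$ equals the weak$^*$-closed convex hull of its $w^*$-strongly exposed points. *)

theory Defs
  imports "HOL-Analysis.Analysis"
begin

(* The dual dual of a real Banach space X is modelled as the bounded linear functionals
  'a =>L real (with operator norm). *)

definition weak_star :: "('a::real_normed_vector \<Rightarrow>\<^sub>L real) topology" where
  "weak_star = pullback_topology UNIV blinfun_apply (product_topology (\<lambda>_. euclideanreal) UNIV)"

definition wstar_closed_convex_hull ::
  "('a::real_normed_vector \<Rightarrow>\<^sub>L real) set \<Rightarrow> ('a \<Rightarrow>\<^sub>L real) set" where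
  "wstar_closed_convex_hull E = \<Inter>{C. convex C \<and> closedin weak_star C \<and> E \<subseteq> C}"

definition strongly_exposed_by :: "'b::metric_space set \<Rightarrow> ('b \<Rightarrow> real) \<Rightarrow> 'b \<Rightarrow> bool" where
  "strongly_exposed_by C phi c0 \<longleftrightarrow> c0 \<in> C \<and>
     (\<forall>s. (\<forall>n. s n \<in> C) \<longrightarrow>
        (\<lambda>n. ereal (phi (s n))) \<longlonglongrightarrow> (SUP c\<in>C. ereal (phi c)) \<longrightarrow> s \<longlonglongrightarrow> c0)"

definition dual_RNP :: "'a::real_normed_vector itself \<Rightarrow> bool" where
  "dual_RNP _ \<longleftrightarrow> (\<forall>K :: ('a \<Rightarrow>\<^sub>L real) set.
      K \<noteq> {} \<and> compactin weak_star K \<and> convex K \<longrightarrow>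
      K = wstar_closed_convex_hull {c0. \<exists>x. strongly_exposed_by K (\<lambda>c. blinfun_apply c x) c0})"

definition edom :: "('b \<Rightarrow> ereal) \<Rightarrow> 'b set" where
  "edom g = {y. g y < \<infinity>}"

definition proper_fun :: "('b \<Rightarrow> ereal) \<Rightarrow> bool" where
  "proper_fun g \<longleftrightarrow> (\<forall>y. g y > -\<infinity>) \<and> edom g \<noteq> {}"

definition epi :: "('b \<Rightarrow> ereal) \<Rightarrow> ('b \<times> real) set" where
  "epi g = {(y, r). g y \<le> ereal r}"

definition convex_efun :: "('b::real_vector \<Rightarrow> ereal) \<Rightarrow> bool" where
  "convex_efun g \<longleftrightarrow> convex (epi g)"

definition wstar_lsc :: "(('a::real_normed_vector \<Rightarrow>\<^sub>L real) \<Rightarrow> ereal) \<Rightarrow> bool" where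
  "wstar_lsc g \<longleftrightarrow> (\<forall>c::ereal. closedin weak_star {y. g y \<le> c})"

definition conj_X :: "(('a::real_normed_vector \<Rightarrow>\<^sub>L real) \<Rightarrow> ereal) \<Rightarrow> 'a \<Rightarrow> ereal" where
  "conj_X g x = (SUP y. ereal (blinfun_apply y x) - g y)"

(* w*-Exp g: points x such that (x,-1) w*-strongly exposes (xs, g xs) in epi g,
  for some xs in dom g. *)
definition wstar_Exp :: "(('a::real_normed_vector \<Rightarrow>\<^sub>L real) \<Rightarrow> ereal) \<Rightarrow> 'a set" where
  "wstar_Exp g = {x. \<exists>xs. xs \<in> edom g \<and>
      strongly_exposed_by (epi g) (\<lambda>(c, r). blinfun_apply c x - r) (xs, real_of_ereal (g xs))}"

end

theory Submission
  imports Defs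
begin

text \<open>The conjugate \<open>g\<^sup>*\<close> restricted to \<open>X\<close> is a supremum of continuous affine functions, so by
  the Baire category theorem it is bounded on a ball inside any open subset of the interior of its
  domain. On such a ball the supremum defining \<open>g\<^sup>*(x)\<close> is attained (Banach--Alaoglu), and the
  set of maximizers, i.e. \<open>\<partial>g\<^sup>*(x)\<close>, is bounded and monotone in \<open>x\<close>. By the Radon--Nikodym
  property the weak*-closed convex hull of the maximizers over a small ball has a strongly exposed
  point; shifting \<open>x\<close> slightly in the exposing direction, monotonicity pushes all maximizers near
  the new point into a thin slice, which has small diameter. So the points near which the
  maximizers have diameter \<open>< 1/n\<close> form a dense open set, and at a point of the residual
  intersection every maximizing sequence for \<open>g\<^sup>*(x)\<close> converges in norm; this says precisely that
  \<open>(x, -1)\<close> strongly exposes the epigraph of \<open>g\<close>.\<close>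

section \<open>The weak* topology\<close>

lemma topspace_weak_star [simp]: "topspace weak_star = UNIV"
  unfolding weak_star_def topspace_pullback_topology by simp

lemma continuous_map_weak_star_eval: "continuous_map weak_star euclideanreal (\<lambda>c. blinfun_apply c x)"
proof -
  have "continuous_map weak_star euclideanreal ((\<lambda>f. f x) \<circ> blinfun_apply)"
    unfolding weak_star_def
    by (rule continuous_map_pullback)
      (use continuous_map_product_projection[of x UNIV "\<lambda>_. euclideanreal"] in simp)
  then show ?thesis by (simp add: o_def)
qed

lemma closedin_weak_star_eval_le: "closedin weak_star {c. blinfun_apply c x \<le> a}"
  using closedin_continuous_map_preimage[OF continuous_map_weak_star_eval[of x], of "{..a}"] by simp

lemma openin_weak_star_eval_less: "openin weak_star {c. blinfun_apply c x < a}"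
  using openin_continuous_map_preimage[OF continuous_map_weak_star_eval[of x], of "{..<a}"] by simp

lemma norm_blinfun_le_iff:
  fixes c :: "'a::real_normed_vector \<Rightarrow>\<^sub>L real"
  assumes "0 \<le> R"
  shows "norm c \<le> R \<longleftrightarrow> (\<forall>x. blinfun_apply c x \<le> R * norm x)"
proof
  assume "norm c \<le> R"
  then show "\<forall>x. blinfun_apply c x \<le> R * norm x"
    by (metis abs_le_D1 norm_blinfun mult_right_mono norm_ge_zero order_trans real_norm_def)
next
  assume le: "\<forall>x. blinfun_apply c x \<le> R * norm x"
  show "norm c \<le> R"
  proof (rule norm_blinfun_bound[OF assms])
    fix x
    show "norm (blinfun_apply c x) \<le> R * norm x"
      using le[rule_format, of x] le[rule_format, of "-x"] by (simp add: blinfun.minus_right)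
  qed
qed

lemma norm_blinfun_le_of_sphere:
  fixes c :: "'a::real_normed_vector \<Rightarrow>\<^sub>L real"
  assumes "r > 0" "K \<ge> 0" and sphere: "\<And>h. norm h = r \<Longrightarrow> blinfun_apply c h \<le> K * r"
  shows "norm c \<le> K"
proof -
  have "blinfun_apply c v \<le> K * norm v" for v
  proof (cases "v = 0")
    case False
    then have "norm v > 0" by simp
    have "blinfun_apply c ((r / norm v) *\<^sub>R v) \<le> K * r"
      using \<open>r > 0\<close> False by (intro sphere) simp
    then have "(r / norm v) * blinfun_apply c v \<le> (r / norm v) * (K * norm v)"
      using \<open>norm v > 0\<close> by (simp add: blinfun.scaleR_right ac_simps)
    moreover have "r / norm v > 0" using \<open>r > 0\<close> \<open>norm v > 0\<close> by simp
    ultimately show ?thesis by (simp only: mult_le_cancel_left_pos)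
  qed simp
  then show ?thesis using norm_blinfun_le_iff[OF \<open>K \<ge> 0\<close>] by blast
qed

lemma closedin_weak_star_norm_le: "closedin weak_star {c::'a::real_normed_vector \<Rightarrow>\<^sub>L real. norm c \<le> R}"
proof (cases "R \<ge> 0")
  case True
  then have "{c::'a \<Rightarrow>\<^sub>L real. norm c \<le> R} = (\<Inter>x. {c. blinfun_apply c x \<le> R * norm x})"
    using norm_blinfun_le_iff by auto
  then show ?thesis by (auto intro: closedin_INT closedin_weak_star_eval_le)
next
  case False
  then have "{c::'a \<Rightarrow>\<^sub>L real. norm c \<le> R} = {}" by (auto intro: order_trans[OF norm_ge_zero])
  then show ?thesis by simp
qed

lemma compactin_pullback_topology_UNIV:
  assumes "compactin T (f ` K)"
  shows "compactin (pullback_topology UNIV f T) K"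
  unfolding compactin_def
proof (intro conjI allI impI)
  show "K \<subseteq> topspace (pullback_topology UNIV f T)"
    using compactin_subset_topspace[OF assms] by (auto simp: topspace_pullback_topology)
next
  fix \<U> assume \<U>: "(\<forall>U\<in>\<U>. openin (pullback_topology UNIV f T) U) \<and> K \<subseteq> \<Union>\<U>"
  then have "\<forall>U\<in>\<U>. \<exists>V. openin T V \<and> U = f -` V"
    by (simp add: openin_pullback_topology)
  then obtain V where V: "\<And>U. U \<in> \<U> \<Longrightarrow> openin T (V U) \<and> U = f -` V U"
    by metis
  have "f ` K \<subseteq> \<Union>(V ` \<U>)" "\<forall>W\<in>V ` \<U>. openin T W" using \<U> V by fastforce+
  then obtain \<F>' where \<F>': "finite \<F>'" "\<F>' \<subseteq> V ` \<U>" "f ` K \<subseteq> \<Union>\<F>'"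
    using assms unfolding compactin_def by metis
  then obtain \<F> where \<F>: "\<F> \<subseteq> \<U>" "finite \<F>" "\<F>' = V ` \<F>"
    by (meson finite_subset_image)
  have "K \<subseteq> \<Union>\<F>"
  proof
    fix k assume "k \<in> K"
    then obtain U where "U \<in> \<F>" "f k \<in> V U" using \<F> \<F>' by blast
    then show "k \<in> \<Union>\<F>" using V \<F>(1) by blast
  qed
  then show "\<exists>\<F>. finite \<F> \<and> \<F> \<subseteq> \<U> \<and> K \<subseteq> \<Union>\<F>" using \<F> by blast
qed

lemma closedin_product_topology_additive:
  "closedin (product_topology (\<lambda>_. euclideanreal) UNIV) {f::'a::real_vector \<Rightarrow> real. f (x + y) = f x + f y}"
proof -
  have "continuous_map (product_topology (\<lambda>_. euclideanreal) UNIV) euclideanreal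
          (\<lambda>f::'a \<Rightarrow> real. f (x + y) - f x - f y)"
    by (intro continuous_map_diff continuous_map_product_projection) auto
  from closedin_continuous_map_preimage[OF this, of "{0}"] show ?thesis by (simp add: algebra_simps)
qed

lemma closedin_product_topology_homogeneous:
  "closedin (product_topology (\<lambda>_. euclideanreal) UNIV) {f::'a::real_vector \<Rightarrow> real. f (a *\<^sub>R x) = a * f x}"
proof -
  have "continuous_map (product_topology (\<lambda>_. euclideanreal) UNIV) euclideanreal
          (\<lambda>f::'a \<Rightarrow> real. f (a *\<^sub>R x) - a * f x)"
    by (intro continuous_map_diff continuous_map_real_mult_left continuous_map_product_projection) auto
  from closedin_continuous_map_preimage[OF this, of "{0}"] show ?thesis by simp
qed

text \<open>Banach--Alaoglu: the dual ball is the trace on the linear functionals, a closed set, of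
  the Tychonoff-compact product of the intervals \<open>[-R \<parallel>x\<parallel>, R \<parallel>x\<parallel>]\<close>.\<close>

theorem compactin_weak_star_norm_le:
  "compactin weak_star {c::'a::real_normed_vector \<Rightarrow>\<^sub>L real. norm c \<le> R}"
proof (cases "R \<ge> 0")
  case False
  then have "{c::'a \<Rightarrow>\<^sub>L real. norm c \<le> R} = {}" by (auto intro: order_trans[OF norm_ge_zero])
  then show ?thesis by simp
next
  case True
  let ?T = "product_topology (\<lambda>_. euclideanreal) (UNIV :: 'a set)"
  define P :: "('a \<Rightarrow> real) set" where "P = (\<Pi>\<^sub>E x\<in>UNIV. {-R * norm x .. R * norm x})"
  define L where "L = (\<Inter>x y. {f::'a \<Rightarrow> real. f (x + y) = f x + f y}) \<inter>
                      (\<Inter>a x. {f::'a \<Rightarrow> real. f (a *\<^sub>R x) = a * f x})"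
  have "compactin ?T P"
    unfolding P_def by (subst compactin_PiE) (auto simp: compactin_euclidean_iff)
  moreover have "closedin ?T L"
    unfolding L_def
    by (intro closedin_Int closedin_INT closedin_product_topology_additive
        closedin_product_topology_homogeneous) auto
  moreover have "blinfun_apply ` {c::'a \<Rightarrow>\<^sub>L real. norm c \<le> R} = P \<inter> L"
  proof (intro equalityI subsetI)
    fix f assume "f \<in> blinfun_apply ` {c::'a \<Rightarrow>\<^sub>L real. norm c \<le> R}"
    then obtain c where c: "norm c \<le> R" "f = blinfun_apply c" by blast
    have "\<bar>f x\<bar> \<le> R * norm x" for x
      using c norm_blinfun[of c x] by (metis mult_right_mono norm_ge_zero order_trans real_norm_def)
    then have "-(R * norm x) \<le> f x \<and> f x \<le> R * norm x" for x by (meson abs_le_D1 abs_le_D2 minus_le_iff)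
    then have "f \<in> P" unfolding P_def by (auto simp: PiE_iff)
    moreover have "f \<in> L" unfolding L_def c by (auto simp: blinfun.add_right blinfun.scaleR_right)
    ultimately show "f \<in> P \<inter> L" by blast
  next
    fix f assume f: "f \<in> P \<inter> L"
    then have "f x \<in> {-R * norm x .. R * norm x}" for x
      unfolding P_def by (auto simp: PiE_iff)
    then have bound: "\<bar>f x\<bar> \<le> R * norm x" for x
      by (simp add: abs_le_iff) (meson minus_le_iff)
    have "bounded_linear f"
      by (rule bounded_linear_intro[where K=R]) (use f bound in \<open>auto simp: L_def mult.commute\<close>)
    then have "f = blinfun_apply (Blinfun f)" "norm (Blinfun f) \<le> R"
      using bound by (auto simp: bounded_linear_Blinfun_apply intro!: norm_blinfun_bound[OF True])
    then show "f \<in> blinfun_apply ` {c::'a \<Rightarrow>\<^sub>L real. norm c \<le> R}" by blast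
  qed
  ultimately have "compactin ?T (blinfun_apply ` {c::'a \<Rightarrow>\<^sub>L real. norm c \<le> R})"
    by (simp add: compact_Int_closedin)
  then show ?thesis unfolding weak_star_def by (rule compactin_pullback_topology_UNIV)
qed

lemma compactin_Inter_decseq_nonempty:
  fixes T :: "nat \<Rightarrow> 'a set"
  assumes K: "compactin X K" and closed: "\<And>n. closedin X (T n)" and sub: "\<And>n. T n \<subseteq> K"
    and nonempty: "\<And>n. T n \<noteq> {}" and dec: "\<And>m n. m \<le> n \<Longrightarrow> T n \<subseteq> T m"
  shows "(\<Inter>n. T n) \<noteq> {}"
proof -
  have "K \<inter> \<Inter>(range T) \<noteq> {}"
  proof (rule compactin_fip[THEN iffD1, OF K, THEN conjunct2, rule_format], intro conjI ballI allI impI)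
    show "closedin X C" if "C \<in> range T" for C using closed that by blast
    fix \<F> assume "finite \<F> \<and> \<F> \<subseteq> range T"
    then obtain I where I: "finite I" "\<F> = T ` I" by (meson finite_subset_image)
    have "T (Max (insert 0 I)) \<subseteq> T i" if "i \<in> I" for i using I that by (intro dec) simp
    then have "T (Max (insert 0 I)) \<subseteq> K \<inter> \<Inter>\<F>" using I sub by blast
    then show "K \<inter> \<Inter>\<F> \<noteq> {}" using nonempty by blast
  qed
  then show ?thesis by auto
qed

section \<open>Baire category in Banach spaces\<close>

lemma Baire_ball:
  fixes G :: "nat \<Rightarrow> 'a::banach set"
  assumes "r > 0" and "\<And>n. open (G n)"
    and dense: "\<And>n y \<delta>. \<delta> > 0 \<Longrightarrow> ball y \<delta> \<subseteq> ball z r \<Longrightarrow> G n \<inter> ball y \<delta> \<noteq> {}"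
  shows "\<exists>x\<in>ball z r. \<forall>n. x \<in> G n"
proof -
  let ?X = "top_of_set (ball z r)"
  have "?X closure_of \<Inter>(range (\<lambda>n. ball z r \<inter> G n)) = topspace ?X"
  proof (rule Baire_category)
    show "completely_metrizable_space ?X \<or> locally_compact_space ?X \<and> regular_space ?X"
      by (intro disjI1 completely_metrizable_space_openin completely_metrizable_space_euclidean) simp
    fix T assume "T \<in> range (\<lambda>n. ball z r \<inter> G n)"
    then obtain n where T: "T = ball z r \<inter> G n" by blast
    have "x \<in> ?X closure_of T" if x: "x \<in> ball z r" for x
      unfolding in_closure_of
    proof (intro conjI allI impI)
      show "x \<in> topspace ?X" using x by simp
      fix U assume U: "x \<in> U \<and> openin ?X U"
      then obtain V where V: "open V" "U = V \<inter> ball z r"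
        unfolding openin_subtopology by (auto simp: openin_open)
      then obtain \<eta> where \<eta>: "\<eta> > 0" "ball x \<eta> \<subseteq> V" using U open_contains_ball by blast
      have "ball x (min \<eta> (r - dist z x)) \<subseteq> ball z r"
      proof
        fix y assume "y \<in> ball x (min \<eta> (r - dist z x))"
        then show "y \<in> ball z r" using dist_triangle[of z y x] by simp
      qed
      moreover have "min \<eta> (r - dist z x) > 0" using \<eta> x by simp
      ultimately obtain y where "y \<in> G n" "y \<in> ball x (min \<eta> (r - dist z x))"
        using dense by blast
      moreover from this have "y \<in> V" "y \<in> ball z r"
        using \<eta> \<open>ball x (min \<eta> (r - dist z x)) \<subseteq> ball z r\<close> by auto
      ultimately show "\<exists>y. y \<in> T \<and> y \<in> U" unfolding T V(2) by blast
    qed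
    then have "?X closure_of T = topspace ?X"
      using closure_of_subset_topspace[of ?X T] by auto
    moreover have "openin ?X T" unfolding T using assms(2)[of n] by (rule openin_open_Int)
    ultimately show "openin ?X T \<and> ?X closure_of T = topspace ?X" by blast
  qed simp
  moreover have "topspace ?X \<noteq> {}" using \<open>r > 0\<close> by simp
  ultimately have "\<Inter>(range (\<lambda>n. ball z r \<inter> G n)) \<noteq> {}" by (metis closure_of_empty)
  then obtain x where "\<And>n. x \<in> ball z r \<inter> G n" by blast
  then show ?thesis by blast
qed

lemma Baire_closed_cover_ball:
  fixes F :: "nat \<Rightarrow> 'a::banach set"
  assumes "open U" "U \<noteq> {}" and "\<And>k. closed (F k)" and "U \<subseteq> (\<Union>k. F k)"
  obtains k z r where "r > 0" "ball z r \<subseteq> U \<inter> F k"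
proof -
  let ?X = "top_of_set U"
  have "\<exists>k. ?X interior_of (U \<inter> F k) \<noteq> {}"
  proof (rule ccontr)
    assume "\<not> ?thesis"
    then have "?X interior_of \<Union>(range (\<lambda>k. U \<inter> F k)) = {}"
      using assms(1,3)
      by (intro Baire_category_alt disjI1 completely_metrizable_space_openin
          completely_metrizable_space_euclidean) (auto intro: closedin_closed_Int)
    moreover have "\<Union>(range (\<lambda>k. U \<inter> F k)) = topspace ?X" using assms(4) by auto
    ultimately show False using \<open>U \<noteq> {}\<close> interior_of_topspace[of ?X] by simp
  qed
  then obtain k p T where "openin ?X T" "p \<in> T" "T \<subseteq> U \<inter> F k"
    unfolding interior_of_def by blast
  moreover from this have "open T" using \<open>open U\<close> by (blast intro: openin_open_trans)
  ultimately obtain r where "r > 0" "ball p r \<subseteq> U \<inter> F k"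
    by (meson open_contains_ball order_trans)
  then show ?thesis using that by blast
qed

section \<open>Strongly exposed points of dual sets\<close>

lemma convex_blinfun_eval_le: "convex {c::'a::real_normed_vector \<Rightarrow>\<^sub>L real. blinfun_apply c y \<le> a}"
  unfolding convex_def
proof (intro ballI allI impI)
  fix c d :: "'a \<Rightarrow>\<^sub>L real" and u v :: real
  assume "c \<in> {c. blinfun_apply c y \<le> a}" "d \<in> {c. blinfun_apply c y \<le> a}" "0 \<le> u" "0 \<le> v" "u + v = 1"
  then have "u * blinfun_apply c y + v * blinfun_apply d y \<le> u * a + v * a"
    by (intro add_mono mult_left_mono) auto
  then show "u *\<^sub>R c + v *\<^sub>R d \<in> {c. blinfun_apply c y \<le> a}"
    using \<open>u + v = 1\<close> by (simp add: distrib_right[symmetric] blinfun.add_left blinfun.scaleR_left)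
qed

lemma wstar_closed_convex_hull_minimal:
  "convex C \<Longrightarrow> closedin weak_star C \<Longrightarrow> E \<subseteq> C \<Longrightarrow> wstar_closed_convex_hull E \<subseteq> C"
  unfolding wstar_closed_convex_hull_def by blast

lemma wstar_closed_convex_hull_superset: "E \<subseteq> wstar_closed_convex_hull E"
  unfolding wstar_closed_convex_hull_def by blast

lemma convex_wstar_closed_convex_hull: "convex (wstar_closed_convex_hull E)"
  unfolding wstar_closed_convex_hull_def by (rule convex_Inter) blast

lemma closedin_wstar_closed_convex_hull: "closedin weak_star (wstar_closed_convex_hull E)"
  unfolding wstar_closed_convex_hull_def
  by (rule closedin_Inter) (auto intro!: exI[of _ UNIV] simp flip: topspace_weak_star)

lemma wstar_closed_convex_hull_norm_le:
  fixes E :: "('a::real_normed_vector \<Rightarrow>\<^sub>L real) set"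
  assumes "E \<subseteq> {c. norm c \<le> R}"
  shows "wstar_closed_convex_hull E \<subseteq> {c. norm c \<le> R}"
    and "compactin weak_star (wstar_closed_convex_hull E)"
proof -
  have "convex {c::'a \<Rightarrow>\<^sub>L real. norm c \<le> R}"
    using convex_cball[of "0::'a \<Rightarrow>\<^sub>L real" R] by (simp add: cball_def dist_norm)
  then show bounded: "wstar_closed_convex_hull E \<subseteq> {c. norm c \<le> R}"
    by (rule wstar_closed_convex_hull_minimal[OF _ closedin_weak_star_norm_le assms])
  show "compactin weak_star (wstar_closed_convex_hull E)"
    by (rule closed_compactin[OF compactin_weak_star_norm_le bounded
          closedin_wstar_closed_convex_hull])
qed

lemma dual_RNP_strongly_exposed_point:
  assumes "dual_RNP TYPE('a::real_normed_vector)"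
    and "(K :: ('a \<Rightarrow>\<^sub>L real) set) \<noteq> {}" "compactin weak_star K" "convex K"
  obtains c0 y where "strongly_exposed_by K (\<lambda>c. blinfun_apply c y) c0"
proof -
  have "K = wstar_closed_convex_hull {c0. \<exists>y. strongly_exposed_by K (\<lambda>c. blinfun_apply c y) c0}"
    using assms unfolding dual_RNP_def by blast
  moreover have "wstar_closed_convex_hull {} = {}"
    using wstar_closed_convex_hull_minimal[of "{}" "{}"] by auto
  ultimately have "{c0. \<exists>y. strongly_exposed_by K (\<lambda>c. blinfun_apply c y) c0} \<noteq> {}"
    using \<open>K \<noteq> {}\<close> by auto
  then show ?thesis using that by blast
qed

lemma strongly_exposed_by_slice:
  fixes C :: "('a::real_normed_vector \<Rightarrow>\<^sub>L real) set"
  assumes exposed: "strongly_exposed_by C (\<lambda>c. blinfun_apply c y) c0"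
    and bounded: "C \<subseteq> {c. norm c \<le> R}" and "e > 0"
  obtains \<gamma> S where "\<gamma> > 0" "(SUP c\<in>C. ereal (blinfun_apply c y)) = ereal S"
    "\<And>c. c \<in> C \<Longrightarrow> blinfun_apply c y > S - \<gamma> \<Longrightarrow> dist c c0 < e"
proof -
  have "blinfun_apply c y \<le> R * norm y" if "c \<in> C" for c
  proof -
    have "blinfun_apply c y \<le> norm c * norm y" by (metis abs_le_D1 norm_blinfun real_norm_def)
    also have "\<dots> \<le> R * norm y" using bounded that by (auto intro: mult_right_mono)
    finally show ?thesis .
  qed
  then have "(SUP c\<in>C. ereal (blinfun_apply c y)) \<le> ereal (R * norm y)" by (auto intro: SUP_least)
  moreover have "c0 \<in> C" using exposed unfolding strongly_exposed_by_def by blast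
  then have "(SUP c\<in>C. ereal (blinfun_apply c y)) \<ge> ereal (blinfun_apply c0 y)" by (rule SUP_upper)
  ultimately obtain S where sup: "(SUP c\<in>C. ereal (blinfun_apply c y)) = ereal S"
    by (cases "SUP c\<in>C. ereal (blinfun_apply c y)") auto
  have "\<exists>\<gamma>>0. \<forall>c\<in>C. blinfun_apply c y > S - \<gamma> \<longrightarrow> dist c c0 < e"
  proof (rule ccontr)
    assume "\<not> ?thesis"
    then have "\<forall>n::nat. \<exists>c. c \<in> C \<and> blinfun_apply c y > S - 1/(real n + 1) \<and> dist c c0 \<ge> e"
      by (metis divide_pos_pos linorder_not_le of_nat_0_le_iff zero_less_one add_pos_nonneg
          add.commute less_add_same_cancel2)
    then obtain c where c: "\<And>n. c n \<in> C" "\<And>n. blinfun_apply (c n) y > S - 1/(real n + 1)"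
      "\<And>n. dist (c n) c0 \<ge> e"
      by metis
    have upper: "blinfun_apply (c n) y \<le> S" for n
    proof -
      have "ereal (blinfun_apply (c n) y) \<le> ereal S"
        unfolding sup[symmetric] by (rule SUP_upper) (rule c(1))
      then show ?thesis by simp
    qed
    have inverse_Suc: "(\<lambda>n. 1/(real n + 1)) = (\<lambda>n. inverse (real (Suc n)))"
      by (simp add: inverse_eq_divide add.commute)
    have lower_lim: "(\<lambda>n. S - 1/(real n + 1)) \<longlonglongrightarrow> S - 0"
      by (intro tendsto_diff tendsto_const) (unfold inverse_Suc, rule LIMSEQ_inverse_real_of_nat)
    have "(\<lambda>n. blinfun_apply (c n) y) \<longlonglongrightarrow> S"
    proof (rule tendsto_sandwich[where f="\<lambda>n. S - 1/(real n + 1)" and h="\<lambda>n. S"])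
      show "\<forall>\<^sub>F n in sequentially. S - 1/(real n + 1) \<le> blinfun_apply (c n) y"
        using c(2) by (simp add: less_imp_le)
      show "\<forall>\<^sub>F n in sequentially. blinfun_apply (c n) y \<le> S" using upper by simp
    qed (use lower_lim in simp_all)
    then have "(\<lambda>n. ereal (blinfun_apply (c n) y)) \<longlonglongrightarrow> (SUP c\<in>C. ereal (blinfun_apply c y))"
      unfolding sup by (simp add: lim_ereal)
    then have "c \<longlonglongrightarrow> c0" using exposed c(1) unfolding strongly_exposed_by_def by blast
    then have "eventually (\<lambda>n. dist (c n) c0 < e) sequentially" using \<open>e > 0\<close> by (rule tendstoD)
    then obtain n where "dist (c n) c0 < e" by (meson eventually_sequentially order.refl)
    then show False using c(3)[of n] by simp
  qed
  then show ?thesis using that sup by blast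
qed

section \<open>The conjugate and its maximizers\<close>

abbreviation conj_term :: "(('a::real_normed_vector \<Rightarrow>\<^sub>L real) \<Rightarrow> ereal) \<Rightarrow> 'a \<Rightarrow> ('a \<Rightarrow>\<^sub>L real) \<Rightarrow> ereal"
  where "conj_term g x c \<equiv> ereal (blinfun_apply c x) - g c"

text \<open>For convex \<open>g\<close> this is the subdifferential of the conjugate at \<open>x\<close>.\<close>

definition conj_maximizers :: "(('a::real_normed_vector \<Rightarrow>\<^sub>L real) \<Rightarrow> ereal) \<Rightarrow> 'a \<Rightarrow> ('a \<Rightarrow>\<^sub>L real) set"
  where "conj_maximizers g x = {c. conj_term g x c = conj_X g x}"

lemma conj_term_le_conj_X: "conj_term g x c \<le> conj_X g x"
  unfolding conj_X_def by (rule SUP_upper) simp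

locale proper_wstar_lsc =
  fixes g :: "('a::banach \<Rightarrow>\<^sub>L real) \<Rightarrow> ereal"
  assumes proper: "proper_fun g" and lsc: "wstar_lsc g"
begin

lemma g_gt_minf: "g c > -\<infinity>"
  using proper unfolding proper_fun_def by blast

lemma conj_term_ge_iff:
  "conj_term g x c \<ge> ereal a \<longleftrightarrow> g c \<noteq> \<infinity> \<and> blinfun_apply c x - real_of_ereal (g c) \<ge> a"
  using g_gt_minf[of c] by (cases "g c") auto

lemma conj_term_le_iff:
  "conj_term g x c \<le> ereal a \<longleftrightarrow> g c = \<infinity> \<or> blinfun_apply c x - real_of_ereal (g c) \<le> a"
  using g_gt_minf[of c] by (cases "g c") auto

lemma conj_X_gt_minf: "conj_X g x > -\<infinity>"
proof -
  obtain c where "g c < \<infinity>" using proper unfolding proper_fun_def edom_def by blast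
  then have "conj_term g x c > -\<infinity>" using g_gt_minf[of c] by (cases "g c") auto
  then show ?thesis using conj_term_le_conj_X[of c x g] by order
qed

text \<open>The only place where the weak* lower semicontinuity of \<open>g\<close> enters.\<close>

lemma closedin_weak_star_conj_term_ge: "closedin weak_star {c. conj_term g x c \<ge> ereal a}"
proof -
  have "openin weak_star (- {c. conj_term g x c \<ge> ereal a})"
  proof (subst openin_subopen, intro ballI)
    fix c0 assume "c0 \<in> - {c. conj_term g x c \<ge> ereal a}"
    then have c0: "\<not> (g c0 \<noteq> \<infinity> \<and> blinfun_apply c0 x - real_of_ereal (g c0) \<ge> a)"
      by (simp add: conj_term_ge_iff)
    define q where "q = blinfun_apply c0 x - a"
    obtain \<eta> where \<eta>: "\<eta> > 0" "g c0 > ereal (q + \<eta>)"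
    proof (cases "g c0 = \<infinity>")
      case True then show ?thesis using that[of 1] by simp
    next
      case False
      then obtain G where G: "g c0 = ereal G" using g_gt_minf[of c0] by (cases "g c0") auto
      then have "G > q" using c0 unfolding q_def by auto
      then show ?thesis using G by (intro that[of "(G - q)/2"]) (auto simp: field_simps)
    qed
    define U where "U = - {c. g c \<le> ereal (q + \<eta>)} \<inter> {c. blinfun_apply c x < blinfun_apply c0 x + \<eta>}"
    have "openin weak_star U" unfolding U_def
      using lsc unfolding wstar_lsc_def
      by (intro openin_Int openin_weak_star_eval_less)
        (metis Compl_eq_Diff_UNIV openin_diff openin_topspace topspace_weak_star)
    moreover have "c0 \<in> U" unfolding U_def using \<eta> by auto
    moreover have "U \<subseteq> - {c. conj_term g x c \<ge> ereal a}"
    proof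
      fix c assume "c \<in> U"
      then have "g c > ereal (q + \<eta>)" "blinfun_apply c x < blinfun_apply c0 x + \<eta>"
        unfolding U_def by auto
      then show "c \<in> - {c. conj_term g x c \<ge> ereal a}"
        using g_gt_minf[of c] unfolding q_def by (cases "g c") auto
    qed
    ultimately show "\<exists>U. openin weak_star U \<and> c0 \<in> U \<and> U \<subseteq> - {c. conj_term g x c \<ge> ereal a}"
      by blast
  qed
  then show ?thesis unfolding closedin_def by (simp add: Compl_eq_Diff_UNIV)
qed

lemma closed_conj_X_le: "closed {x. conj_X g x \<le> ereal a}"
proof -
  have "closed {x. conj_term g x c \<le> ereal a}" for c
  proof (cases "g c = \<infinity>")
    case False
    then have "{x. conj_term g x c \<le> ereal a} = {x. blinfun_apply c x \<le> a + real_of_ereal (g c)}"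
      by (auto simp: conj_term_le_iff)
    moreover have "closed {x. blinfun_apply c x \<le> a + real_of_ereal (g c)}"
      by (intro closed_Collect_le continuous_intros)
    ultimately show ?thesis by simp
  qed simp
  moreover have "{x. conj_X g x \<le> ereal a} = (\<Inter>c. {x. conj_term g x c \<le> ereal a})"
    unfolding conj_X_def by (auto simp: SUP_le_iff)
  ultimately show ?thesis by auto
qed

lemma SUP_epi_eq_conj_X: "(SUP (c, r)\<in>epi g. ereal (blinfun_apply c x - r)) = conj_X g x"
proof (rule antisym)
  show "(SUP (c, r)\<in>epi g. ereal (blinfun_apply c x - r)) \<le> conj_X g x"
  proof (rule SUP_least, clarify)
    fix c r assume "(c, r) \<in> epi g"
    then have "g c \<le> ereal r" unfolding epi_def by simp
    then have "ereal (blinfun_apply c x - r) \<le> conj_term g x c"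
      using g_gt_minf[of c] by (cases "g c") auto
    then show "ereal (blinfun_apply c x - r) \<le> conj_X g x"
      using conj_term_le_conj_X[of c x g] by order
  qed
  show "conj_X g x \<le> (SUP (c, r)\<in>epi g. ereal (blinfun_apply c x - r))"
    unfolding conj_X_def
  proof (rule SUP_least)
    fix c
    show "conj_term g x c \<le> (SUP (c, r)\<in>epi g. ereal (blinfun_apply c x - r))"
    proof (cases "g c")
      case (real G)
      then have "(c, G) \<in> epi g" unfolding epi_def by simp
      from SUP_upper[OF this, of "\<lambda>(c, r). ereal (blinfun_apply c x - r)"] real show ?thesis by simp
    qed (use g_gt_minf[of c] in auto)
  qed
qed

text \<open>Tikhonov well-posedness of the maximization defining \<open>conj_X g x\<close> means exactly that
  \<open>(x, -1)\<close> strongly exposes the epigraph.\<close>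

lemma wstar_Exp_if_near_maximizers_converge:
  assumes conj: "conj_X g x = ereal F" and cs: "cs \<in> conj_maximizers g x"
    and converge: "\<And>e. e > 0 \<Longrightarrow> \<exists>\<alpha>>0. \<forall>c. conj_term g x c \<ge> ereal (F - \<alpha>) \<longrightarrow> dist c cs < e"
  shows "x \<in> wstar_Exp g"
proof -
  define \<phi> where "\<phi> = (\<lambda>(c::'a \<Rightarrow>\<^sub>L real, r::real). blinfun_apply c x - r)"
  have "conj_term g x cs = ereal F" using cs conj unfolding conj_maximizers_def by simp
  then obtain G where G: "g cs = ereal G" and "blinfun_apply cs x - G = F"
    using g_gt_minf[of cs] by (cases "g cs") auto
  have epi_cs: "(cs, G) \<in> epi g" unfolding epi_def using G by simp
  have sup: "(SUP p\<in>epi g. ereal (\<phi> p)) = ereal F"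
    using SUP_epi_eq_conj_X[of x] conj unfolding \<phi>_def by (simp add: case_prod_unfold)
  have "p \<longlonglongrightarrow> (cs, G)" if p_epi: "\<And>n. p n \<in> epi g"
    and lim: "(\<lambda>n. ereal (\<phi> (p n))) \<longlonglongrightarrow> (SUP p\<in>epi g. ereal (\<phi> p))" for p
  proof -
    have lim_\<phi>: "(\<lambda>n. \<phi> (p n)) \<longlonglongrightarrow> F" using lim unfolding sup by (simp add: lim_ereal)
    have near: "conj_term g x (fst (p n)) \<ge> ereal (\<phi> (p n))" for n
      using p_epi[of n] g_gt_minf[of "fst (p n)"] unfolding epi_def \<phi>_def
      by (cases "p n"; cases "g (fst (p n))") auto
    have fst_lim: "(\<lambda>n. fst (p n)) \<longlonglongrightarrow> cs"
    proof (rule metric_LIMSEQ_I)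
      fix e :: real assume "e > 0"
      then obtain \<alpha> where "\<alpha> > 0" and \<alpha>: "\<And>c. conj_term g x c \<ge> ereal (F - \<alpha>) \<Longrightarrow> dist c cs < e"
        using converge by blast
      obtain N where N: "\<And>n. n \<ge> N \<Longrightarrow> dist (\<phi> (p n)) F < \<alpha>"
        using metric_LIMSEQ_D[OF lim_\<phi> \<open>\<alpha> > 0\<close>] by blast
      have "dist (fst (p n)) cs < e" if "n \<ge> N" for n
      proof (rule \<alpha>)
        have "ereal (F - \<alpha>) \<le> ereal (\<phi> (p n))"
          using N[OF that] by (simp add: dist_real_def abs_less_iff)
        then show "ereal (F - \<alpha>) \<le> conj_term g x (fst (p n))" using near[of n] by order
      qed
      then show "\<exists>N. \<forall>n\<ge>N. dist (fst (p n)) cs < e" by blast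
    qed
    then have "(\<lambda>n. blinfun_apply (fst (p n)) x - \<phi> (p n)) \<longlonglongrightarrow> blinfun_apply cs x - F"
      using lim_\<phi> by (intro tendsto_diff blinfun.tendsto tendsto_const)
    moreover have "blinfun_apply (fst (p n)) x - \<phi> (p n) = snd (p n)" for n
      unfolding \<phi>_def by (cases "p n") simp
    moreover have "blinfun_apply cs x - F = G" using \<open>blinfun_apply cs x - G = F\<close> by simp
    ultimately have "(\<lambda>n. snd (p n)) \<longlonglongrightarrow> G" by simp
    with fst_lim have "(\<lambda>n. (fst (p n), snd (p n))) \<longlonglongrightarrow> (cs, G)" by (rule tendsto_Pair)
    then show ?thesis by simp
  qed
  then have "strongly_exposed_by (epi g) \<phi> (cs, real_of_ereal (g cs))"
    using epi_cs G unfolding strongly_exposed_by_def by auto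
  then show ?thesis unfolding wstar_Exp_def \<phi>_def edom_def using G by (auto intro!: exI[of _ cs])
qed

end

section \<open>Local analysis where the conjugate is bounded\<close>

definition conj_maximizers_locally_small ::
    "(('a::real_normed_vector \<Rightarrow>\<^sub>L real) \<Rightarrow> ereal) \<Rightarrow> real \<Rightarrow> 'a \<Rightarrow> bool" where
  "conj_maximizers_locally_small g e x \<longleftrightarrow>
     (\<exists>\<rho>>0. \<exists>c0. \<forall>x'\<in>ball x \<rho>. \<forall>c\<in>conj_maximizers g x'. dist c c0 < e)"

lemma open_conj_maximizers_locally_small: "open {x. conj_maximizers_locally_small g e x}"
proof (subst open_dist, intro ballI)
  fix x assume "x \<in> {x. conj_maximizers_locally_small g e x}"
  then obtain \<rho> c0 where "\<rho> > 0" and small: "\<forall>x'\<in>ball x \<rho>. \<forall>c\<in>conj_maximizers g x'. dist c c0 < e"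
    unfolding conj_maximizers_locally_small_def by blast
  have "conj_maximizers_locally_small g e y" if "dist y x < \<rho>/2" for y
    unfolding conj_maximizers_locally_small_def
  proof (intro exI[of _ "\<rho>/2"] conjI exI[of _ c0] ballI)
    fix x' c assume "x' \<in> ball y (\<rho>/2)" "c \<in> conj_maximizers g x'"
    moreover have "x' \<in> ball x \<rho>"
      using \<open>x' \<in> ball y (\<rho>/2)\<close> that dist_triangle[of x x' y] by (simp add: dist_commute)
    ultimately show "dist c c0 < e" using small by blast
  qed (use \<open>\<rho> > 0\<close> in simp)
  then show "\<exists>d>0. \<forall>y. dist y x < d \<longrightarrow> y \<in> {x. conj_maximizers_locally_small g e x}"
    using \<open>\<rho> > 0\<close> by (intro exI[of _ "\<rho>/2"]) auto
qed

text \<open>The situation that the Baire category theorem produces inside the domain of the conjugate.\<close>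

locale conj_bounded_on_ball = proper_wstar_lsc g for g :: "('a::banach \<Rightarrow>\<^sub>L real) \<Rightarrow> ereal" +
  fixes z :: 'a and s M L :: real
  assumes radius_pos: "s > 0"
    and conj_upper: "\<And>x. x \<in> ball z (2 * s) \<Longrightarrow> conj_X g x \<le> ereal M"
    and conj_lower: "\<And>x. x \<in> ball z (2 * s) \<Longrightarrow> conj_X g x \<ge> ereal (-L)"
begin

definition conj_real :: "'a \<Rightarrow> real" where "conj_real x = real_of_ereal (conj_X g x)"

lemma ball_subset_double_ball: "ball z s \<subseteq> ball z (2 * s)"
  using radius_pos by (intro subset_ball) simp

lemma conj_X_eq_conj_real: "x \<in> ball z (2 * s) \<Longrightarrow> conj_X g x = ereal (conj_real x)"
  using conj_upper[of x] conj_lower[of x] unfolding conj_real_def by (cases "conj_X g x") auto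

text \<open>A near-maximizer at \<open>x \<in> ball z s\<close> is bounded above on \<open>ball x s \<subseteq> ball z (2 * s)\<close>.\<close>

lemma norm_le_of_conj_term_ge:
  assumes x: "x \<in> ball z s" and a: "conj_term g x c \<ge> ereal a"
  shows "norm c \<le> (M - a) / s"
proof -
  from a have gc: "g c \<noteq> \<infinity>" and ca: "blinfun_apply c x - real_of_ereal (g c) \<ge> a"
    by (auto simp: conj_term_ge_iff)
  have unit_bound: "blinfun_apply c u \<le> (M - a) / s" if u: "norm u \<le> 1" for u
  proof -
    have "dist z (x + s *\<^sub>R u) \<le> dist z x + norm (s *\<^sub>R u)"
      using dist_triangle[of z "x + s *\<^sub>R u" x] by (simp add: dist_norm)
    also have "\<dots> < s + s"
      using x u radius_pos by (intro add_less_le_mono) (auto simp: mult_left_le)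
    finally have "x + s *\<^sub>R u \<in> ball z (2 * s)" by simp
    then have "conj_term g (x + s *\<^sub>R u) c \<le> ereal M"
      by (rule order_trans[OF conj_term_le_conj_X conj_upper])
    then have "blinfun_apply c (x + s *\<^sub>R u) - real_of_ereal (g c) \<le> M"
      using gc by (simp add: conj_term_le_iff)
    then have "s * blinfun_apply c u \<le> M - a"
      using ca by (simp add: blinfun.add_right blinfun.scaleR_right)
    then show ?thesis using radius_pos by (simp add: pos_le_divide_eq mult.commute)
  qed
  have "0 \<le> (M - a) / s" using unit_bound[of 0] by simp
  then show ?thesis using unit_bound by (intro norm_blinfun_le_of_sphere[of 1]) auto
qed

text \<open>The conjugate is attained: the superlevel sets are weak*-closed subsets of a fixed dual
  ball, which is weak*-compact.\<close>

lemma conj_maximizers_nonempty: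
  assumes x: "x \<in> ball z s"
  shows "conj_maximizers g x \<noteq> {}"
proof -
  define F where "F = conj_real x"
  have conj_x: "conj_X g x = ereal F"
    using conj_X_eq_conj_real x ball_subset_double_ball F_def by blast
  define T where "T k = {c. conj_term g x c \<ge> ereal (F - 1/(real k + 1))}" for k :: nat
  have "(\<Inter>k. T k) \<noteq> {}"
  proof (rule compactin_Inter_decseq_nonempty)
    show "compactin weak_star {c. norm c \<le> (M - (F - 1)) / s}"
      by (rule compactin_weak_star_norm_le)
    show "closedin weak_star (T k)" for k
      unfolding T_def by (rule closedin_weak_star_conj_term_ge)
    show "T k \<subseteq> {c. norm c \<le> (M - (F - 1)) / s}" for k
    proof
      fix c assume "c \<in> T k"
      then have "norm c \<le> (M - (F - 1/(real k + 1))) / s"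
        unfolding T_def by (intro norm_le_of_conj_term_ge[OF x]) simp
      also have "\<dots> \<le> (M - (F - 1)) / s"
        using radius_pos by (intro divide_right_mono) (auto simp: field_simps)
      finally show "c \<in> {c. norm c \<le> (M - (F - 1)) / s}" by simp
    qed
    show "T k \<noteq> {}" for k
    proof -
      have "ereal (F - 1/(real k + 1)) < conj_X g x" using conj_x by simp
      then obtain c where "ereal (F - 1/(real k + 1)) < conj_term g x c"
        unfolding conj_X_def by (auto simp: less_SUP_iff)
      then show ?thesis unfolding T_def by (auto intro: less_imp_le)
    qed
    show "T n \<subseteq> T m" if "m \<le> n" for m n
    proof -
      have "1/(real n + 1) \<le> 1/(real m + 1)" using that by (simp add: frac_le)
      then show ?thesis unfolding T_def by (auto elim!: order_trans[rotated])
    qed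
  qed
  then obtain c where c: "\<And>k. c \<in> T k" by blast
  then have gc: "g c \<noteq> \<infinity>"
    and approx: "\<And>k. blinfun_apply c x - real_of_ereal (g c) \<ge> F - 1/(real k + 1)"
    unfolding T_def by (auto simp: conj_term_ge_iff)
  have "blinfun_apply c x - real_of_ereal (g c) \<ge> F"
  proof (rule ccontr)
    assume "\<not> ?thesis"
    then obtain k :: nat where "1/(real k + 1) < F - (blinfun_apply c x - real_of_ereal (g c))"
      by (metis diff_gt_0_iff_gt linorder_not_le nat_approx_posE of_nat_Suc add.commute)
    then show False using approx[of k] by linarith
  qed
  then have "conj_term g x c \<ge> conj_X g x" using conj_x gc by (simp add: conj_term_ge_iff)
  then have "c \<in> conj_maximizers g x"
    unfolding conj_maximizers_def using conj_term_le_conj_X[of c x g] by (simp add: order_antisym)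
  then show ?thesis by blast
qed

lemma norm_conj_maximizer_le:
  assumes "x \<in> ball z s" "c \<in> conj_maximizers g x"
  shows "norm c \<le> (M + L) / s"
proof -
  have "conj_term g x c \<ge> ereal (-L)"
    using assms ball_subset_double_ball conj_lower unfolding conj_maximizers_def by auto
  from norm_le_of_conj_term_ge[OF assms(1) this] show ?thesis by simp
qed

lemma conj_real_subgradient:
  assumes x: "x \<in> ball z (2 * s)" and y: "y \<in> ball z (2 * s)" and c: "c \<in> conj_maximizers g x"
  shows "conj_real y \<ge> conj_real x + blinfun_apply c y - blinfun_apply c x"
proof -
  have "conj_term g x c = ereal (conj_real x)"
    using c conj_X_eq_conj_real[OF x] unfolding conj_maximizers_def by simp
  moreover have "conj_term g y c \<le> ereal (conj_real y)"
    using conj_term_le_conj_X[of c y g] conj_X_eq_conj_real[OF y] by simp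
  ultimately show ?thesis using g_gt_minf[of c] by (cases "g c") auto
qed

lemma conj_maximizers_monotone:
  assumes "x \<in> ball z (2 * s)" "x' \<in> ball z (2 * s)"
    and "c \<in> conj_maximizers g x" "c' \<in> conj_maximizers g x'"
  shows "blinfun_apply c (x' - x) \<le> blinfun_apply c' (x' - x)"
  using conj_real_subgradient[OF assms(1,2,3)] conj_real_subgradient[OF assms(2,1,4)]
  by (simp add: blinfun.diff_right)

text \<open>A strongly exposed point of the weak*-closed convex hull of the maximizers over a small
  ball yields a slice of small diameter through the maximizers.\<close>

lemma conj_maximizers_slice:
  assumes rnp: "dual_RNP TYPE('a)"
    and "\<delta> > 0" "ball y0 \<delta> \<subseteq> ball z s" and "e > 0"
  obtains \<gamma> x1 c1 y c0 where "\<gamma> > 0" "x1 \<in> ball y0 \<delta>" "c1 \<in> conj_maximizers g x1"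
    "\<And>x c. x \<in> ball y0 \<delta> \<Longrightarrow> c \<in> conj_maximizers g x \<Longrightarrow>
       blinfun_apply c y > blinfun_apply c1 y - \<gamma> \<Longrightarrow> dist c c0 < e"
proof -
  define R where "R = (M + L) / s"
  define A where "A = \<Union>(conj_maximizers g ` ball y0 \<delta>)"
  define C where "C = wstar_closed_convex_hull A"
  have A_bounded: "A \<subseteq> {c. norm c \<le> R}"
    unfolding A_def R_def using norm_conj_maximizer_le assms(3) by fastforce
  have "conj_maximizers g y0 \<noteq> {}"
    using conj_maximizers_nonempty assms(2,3) centre_in_ball[of y0 \<delta>] by blast
  then have "A \<noteq> {}" unfolding A_def using \<open>\<delta> > 0\<close> by auto
  have "A \<subseteq> C" unfolding C_def by (rule wstar_closed_convex_hull_superset)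
  then have "C \<noteq> {}" using \<open>A \<noteq> {}\<close> by blast
  moreover have C_bounded: "C \<subseteq> {c. norm c \<le> R}" "compactin weak_star C"
    unfolding C_def using wstar_closed_convex_hull_norm_le[OF A_bounded] by blast+
  moreover have "convex C" unfolding C_def by (rule convex_wstar_closed_convex_hull)
  ultimately obtain c0 y where exposed: "strongly_exposed_by C (\<lambda>c. blinfun_apply c y) c0"
    using dual_RNP_strongly_exposed_point[OF rnp] by blast
  obtain \<gamma> S where \<gamma>: "\<gamma> > 0" and sup: "(SUP c\<in>C. ereal (blinfun_apply c y)) = ereal S"
    and slice: "\<And>c. c \<in> C \<Longrightarrow> blinfun_apply c y > S - \<gamma> \<Longrightarrow> dist c c0 < e"
    by (rule strongly_exposed_by_slice[OF exposed C_bounded(1) \<open>e > 0\<close>]) (rule that)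
  obtain c1 where "c1 \<in> A" and c1: "blinfun_apply c1 y > S - \<gamma>/2"
  proof (rule ccontr)
    assume "\<not> thesis"
    then have "A \<subseteq> {c. blinfun_apply c y \<le> S - \<gamma>/2}" using that not_le by blast
    then have "C \<subseteq> {c. blinfun_apply c y \<le> S - \<gamma>/2}"
      unfolding C_def
      by (rule wstar_closed_convex_hull_minimal[OF convex_blinfun_eval_le closedin_weak_star_eval_le])
    then have "(SUP c\<in>C. ereal (blinfun_apply c y)) \<le> ereal (S - \<gamma>/2)" by (auto intro!: SUP_least)
    then show False using sup \<gamma> by simp
  qed
  then obtain x1 where "x1 \<in> ball y0 \<delta>" "c1 \<in> conj_maximizers g x1" unfolding A_def by blast
  show ?thesis
  proof (rule that[of "\<gamma>/2" x1 c1])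
    show "\<gamma>/2 > 0" using \<gamma> by simp
    show "x1 \<in> ball y0 \<delta>" "c1 \<in> conj_maximizers g x1" by fact+
  next
    fix x c assume "x \<in> ball y0 \<delta>" "c \<in> conj_maximizers g x"
      and "blinfun_apply c y > blinfun_apply c1 y - \<gamma>/2"
    then have "c \<in> C" "blinfun_apply c y > S - \<gamma>" using c1 \<open>A \<subseteq> C\<close> unfolding A_def by force+
    then show "dist c c0 < e" by (rule slice)
  qed
qed

text \<open>Moving from \<open>x1\<close> in the exposing direction \<open>y\<close> forces, by monotonicity, every maximizer
  near the new point into the slice through a maximizer at \<open>x1\<close>.\<close>

lemma conj_maximizers_shift_estimate:
  assumes "x1 \<in> ball z s" "x \<in> ball z s"
    and "c1 \<in> conj_maximizers g x1" "c \<in> conj_maximizers g x"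
    and "norm (x - (x1 + t *\<^sub>R y)) \<le> \<rho>"
  shows "t * (blinfun_apply c1 y - blinfun_apply c y) \<le> 2 * ((M + L) / s) * \<rho>"
proof -
  define w where "w = x - (x1 + t *\<^sub>R y)"
  have small: "\<bar>blinfun_apply d w\<bar> \<le> (M + L) / s * \<rho>" if "norm d \<le> (M + L) / s" for d
  proof -
    have "\<bar>blinfun_apply d w\<bar> \<le> norm d * norm w" using norm_blinfun[of d w] by simp
    also have "\<dots> \<le> (M + L) / s * \<rho>"
      using that assms(5) order_trans[OF norm_ge_zero that] unfolding w_def by (intro mult_mono) auto
    finally show ?thesis .
  qed
  have "blinfun_apply c1 (x - x1) \<le> blinfun_apply c (x - x1)"
    using conj_maximizers_monotone assms(1-4) ball_subset_double_ball by blast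
  moreover have "x - x1 = t *\<^sub>R y + w" unfolding w_def by simp
  ultimately have "t * blinfun_apply c1 y + blinfun_apply c1 w \<le> t * blinfun_apply c y + blinfun_apply c w"
    by (simp add: blinfun.add_right blinfun.scaleR_right)
  then have "t * blinfun_apply c1 y \<le> t * blinfun_apply c y + 2 * ((M + L) / s) * \<rho>"
    using small[OF norm_conj_maximizer_le[OF assms(1,3)]] small[OF norm_conj_maximizer_le[OF assms(2,4)]]
    by linarith
  then show ?thesis by (simp add: right_diff_distrib)
qed

lemma conj_maximizers_locally_small_dense:
  assumes rnp: "dual_RNP TYPE('a)"
    and "\<delta> > 0" "ball y0 \<delta> \<subseteq> ball z s" and "e > 0"
  shows "\<exists>x\<in>ball y0 \<delta>. conj_maximizers_locally_small g e x"
proof -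
  obtain \<gamma> x1 c1 y c0 where \<gamma>: "\<gamma> > 0" and x1: "x1 \<in> ball y0 \<delta>" "c1 \<in> conj_maximizers g x1"
    and slice: "\<And>x c. x \<in> ball y0 \<delta> \<Longrightarrow> c \<in> conj_maximizers g x \<Longrightarrow>
       blinfun_apply c y > blinfun_apply c1 y - \<gamma> \<Longrightarrow> dist c c0 < e"
    by (rule conj_maximizers_slice[OF assms]) (rule that)
  define R where "R = (M + L) / s"
  have "x1 \<in> ball z s" using x1 assms(3) by blast
  then have "norm c1 \<le> R" unfolding R_def using norm_conj_maximizer_le x1 by blast
  then have "R \<ge> 0" using norm_ge_zero[of c1] by linarith
  define t where "t = (\<delta> - dist y0 x1) / (2 * (norm y + 1))"
  have "norm y + 1 > 0" using norm_ge_zero[of y] by linarith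
  then have "t > 0" unfolding t_def using x1 by (intro divide_pos_pos) auto
  define x2 where "x2 = x1 + t *\<^sub>R y"
  have "t * norm y < \<delta> - dist y0 x1"
  proof -
    have "t * norm y \<le> t * (norm y + 1)" using \<open>t > 0\<close> by simp
    also have "\<dots> = (\<delta> - dist y0 x1) / 2" using \<open>norm y + 1 > 0\<close> unfolding t_def by (simp add: field_simps)
    finally show ?thesis using x1 by simp
  qed
  then have "dist y0 x2 < \<delta>"
    using dist_triangle[of y0 x2 x1] \<open>t > 0\<close> unfolding x2_def by (simp add: dist_norm)
  define \<rho> where "\<rho> = min (\<delta> - dist y0 x2) (\<gamma> * t / (2 * (R + 1)))"
  have "\<rho> > 0" unfolding \<rho>_def using \<open>dist y0 x2 < \<delta>\<close> \<gamma> \<open>t > 0\<close> \<open>R \<ge> 0\<close> by auto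
  have "2 * R * \<rho> < t * \<gamma>"
  proof -
    have "2 * R * \<rho> \<le> 2 * R * (\<gamma> * t / (2 * (R + 1)))"
      unfolding \<rho>_def using \<open>R \<ge> 0\<close> by (intro mult_left_mono) auto
    also have "\<dots> = t * \<gamma> * (R / (R + 1))" using \<open>R \<ge> 0\<close> by (simp add: field_simps)
    also have "\<dots> < t * \<gamma> * 1" using \<open>R \<ge> 0\<close> \<gamma> \<open>t > 0\<close> by (intro mult_strict_left_mono) auto
    finally show ?thesis by simp
  qed
  have "conj_maximizers_locally_small g e x2"
    unfolding conj_maximizers_locally_small_def
  proof (intro exI[of _ \<rho>] conjI exI[of _ c0] ballI)
    fix x c assume x: "x \<in> ball x2 \<rho>" and c: "c \<in> conj_maximizers g x"
    have "x \<in> ball y0 \<delta>"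
      using x dist_triangle[of y0 x x2] unfolding \<rho>_def by (simp add: dist_commute)
    then have "x \<in> ball z s" using assms(3) by blast
    moreover have "norm (x - (x1 + t *\<^sub>R y)) \<le> \<rho>"
      using x unfolding x2_def by (simp add: dist_norm norm_minus_commute)
    ultimately have "t * (blinfun_apply c1 y - blinfun_apply c y) \<le> 2 * R * \<rho>"
      unfolding R_def by (rule conj_maximizers_shift_estimate[OF \<open>x1 \<in> ball z s\<close> _ x1(2) c])
    with \<open>2 * R * \<rho> < t * \<gamma>\<close> have "t * (blinfun_apply c1 y - blinfun_apply c y) < t * \<gamma>"
      by linarith
    then have "blinfun_apply c y > blinfun_apply c1 y - \<gamma>" using \<open>t > 0\<close> by simp
    then show "dist c c0 < e" using slice \<open>x \<in> ball y0 \<delta>\<close> c by blast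
  qed (fact \<open>\<rho> > 0\<close>)
  then show ?thesis using \<open>dist y0 x2 < \<delta>\<close> by auto
qed

lemma conj_maximizers_locally_small_residual:
  assumes "dual_RNP TYPE('a)"
  shows "\<exists>x\<in>ball z s. \<forall>n. conj_maximizers_locally_small g (1 / (real n + 1)) x"
proof -
  have "\<exists>x\<in>ball z s. \<forall>n. x \<in> {x. conj_maximizers_locally_small g (1 / (real n + 1)) x}"
  proof (rule Baire_ball[OF radius_pos open_conj_maximizers_locally_small])
    fix n y \<delta> assume "\<delta> > 0" "ball y \<delta> \<subseteq> ball z s"
    then show "{x. conj_maximizers_locally_small g (1 / (real n + 1)) x} \<inter> ball y \<delta> \<noteq> {}"
      using conj_maximizers_locally_small_dense[OF assms, of \<delta> y "1 / (real n + 1)"] by auto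
  qed
  then show ?thesis by simp
qed

lemma near_conj_maximizer_direction_bound:
  assumes "x \<in> ball z (2 * s)" "x + h \<in> ball z (2 * s)"
    and "c' \<in> conj_maximizers g (x + h)" and "conj_term g x c \<ge> ereal (conj_real x - \<alpha>)"
  shows "blinfun_apply c h \<le> blinfun_apply c' h + \<alpha>"
proof -
  have "conj_real x \<ge> conj_real (x + h) + blinfun_apply c' x - blinfun_apply c' (x + h)"
    by (rule conj_real_subgradient[OF assms(2,1,3)])
  moreover have "conj_term g (x + h) c \<le> ereal (conj_real (x + h))"
    using conj_term_le_conj_X[of c "x + h" g] conj_X_eq_conj_real[OF assms(2)] by simp
  ultimately show ?thesis
    using assms(4) g_gt_minf[of c] by (cases "g c") (auto simp: blinfun.add_right)
qed

text \<open>If the maximizers near \<open>x\<close> lie in one \<open>e\<close>-ball, then so do, up to a factor \<open>2\<close>, all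
  sufficiently good near-maximizers at \<open>x\<close>: test them against the maximizers at \<open>x + h\<close>
  for \<open>\<parallel>h\<parallel> = r\<close> small.\<close>

lemma near_conj_maximizers_small:
  assumes x: "x \<in> ball z s" and small: "conj_maximizers_locally_small g e x"
  obtains \<alpha> c0 where "\<alpha> > 0" "\<And>c. conj_term g x c \<ge> ereal (conj_real x - \<alpha>) \<Longrightarrow> norm (c - c0) \<le> 2 * e"
proof -
  obtain \<rho> c0 where "\<rho> > 0"
    and near: "\<And>x' c. x' \<in> ball x \<rho> \<Longrightarrow> c \<in> conj_maximizers g x' \<Longrightarrow> dist c c0 < e"
    using small unfolding conj_maximizers_locally_small_def by blast
  obtain c where "c \<in> conj_maximizers g x" using conj_maximizers_nonempty[OF x] by blast
  then have "e > 0" using near[of x c] \<open>\<rho> > 0\<close> by (meson centre_in_ball dist_not_less_zero le_less_trans not_le)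
  define r where "r = min \<rho> (s - dist z x) / 2"
  have "r > 0" unfolding r_def using \<open>\<rho> > 0\<close> x by auto
  have "r < \<rho>" "r < s - dist z x" using \<open>r > 0\<close> unfolding r_def by (auto simp: min_def)
  then have sphere_ball: "x + h \<in> ball x \<rho> \<and> x + h \<in> ball z s" if "norm h = r" for h
    using that dist_triangle[of z "x + h" x] by (auto simp: dist_norm)
  have "norm (c - c0) \<le> 2 * e" if c: "conj_term g x c \<ge> ereal (conj_real x - e * r)" for c
  proof (rule norm_blinfun_le_of_sphere[OF \<open>r > 0\<close>])
    show "2 * e \<ge> 0" using \<open>e > 0\<close> by simp
    fix h :: 'a assume h: "norm h = r"
    then obtain c' where c': "c' \<in> conj_maximizers g (x + h)"
      using conj_maximizers_nonempty sphere_ball by blast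
    have "x \<in> ball z (2 * s)" "x + h \<in> ball z (2 * s)"
      using x sphere_ball[OF h] ball_subset_double_ball by blast+
    then have "blinfun_apply c h \<le> blinfun_apply c' h + e * r"
      using c' c by (rule near_conj_maximizer_direction_bound)
    moreover have "blinfun_apply (c' - c0) h \<le> e * r"
    proof -
      have "blinfun_apply (c' - c0) h \<le> norm (c' - c0) * norm h"
        by (metis abs_le_D1 norm_blinfun real_norm_def)
      also have "\<dots> \<le> e * r"
        using near[of "x + h" c'] sphere_ball[OF h] c' h \<open>r > 0\<close>
        by (simp add: dist_norm)
      finally show ?thesis .
    qed
    ultimately show "blinfun_apply (c - c0) h \<le> 2 * e * r" by (simp add: blinfun.diff_left)
  qed
  then show ?thesis using that[of "e * r" c0] \<open>e > 0\<close> \<open>r > 0\<close> by simp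
qed

lemma wstar_Exp_if_conj_maximizers_locally_small:
  assumes x: "x \<in> ball z s" and small: "\<And>n. conj_maximizers_locally_small g (1 / (real n + 1)) x"
  shows "x \<in> wstar_Exp g"
proof -
  obtain cs where cs: "cs \<in> conj_maximizers g x" using conj_maximizers_nonempty[OF x] by blast
  have conj: "conj_X g x = ereal (conj_real x)"
    using conj_X_eq_conj_real x ball_subset_double_ball by blast
  show ?thesis
  proof (rule wstar_Exp_if_near_maximizers_converge[OF conj cs])
    fix e :: real assume "e > 0"
    obtain n :: nat where "1 / (real n + 1) < e / 4" using \<open>e > 0\<close>
      by (metis divide_pos_pos nat_approx_posE of_nat_Suc add.commute zero_less_numeral)
    then have n: "4 / (real n + 1) < e" by (simp add: field_simps)
    obtain \<alpha> c0 where "\<alpha> > 0"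
      and near: "\<And>c. conj_term g x c \<ge> ereal (conj_real x - \<alpha>) \<Longrightarrow> norm (c - c0) \<le> 2 * (1 / (real n + 1))"
      by (rule near_conj_maximizers_small[OF x small[of n]]) (rule that)
    have "norm (cs - c0) \<le> 2 * (1 / (real n + 1))"
      using near[of cs] cs conj \<open>\<alpha> > 0\<close> unfolding conj_maximizers_def by simp
    then have "dist c cs < e" if "conj_term g x c \<ge> ereal (conj_real x - \<alpha>)" for c
      using near[OF that] norm_triangle_ineq4[of "c - c0" "cs - c0"] n by (simp add: dist_norm)
    then show "\<exists>\<alpha>>0. \<forall>c. conj_term g x c \<ge> ereal (conj_real x - \<alpha>) \<longrightarrow> dist c cs < e"
      using \<open>\<alpha> > 0\<close> by blast
  qed
qed

end

section \<open>Density of the weak*-strongly exposing points\<close>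

lemma (in proper_wstar_lsc) conj_bounded_on_ball_inside:
  assumes "open U" "U \<noteq> {}" "U \<subseteq> edom (conj_X g)"
  obtains z s M L where "conj_bounded_on_ball g z s M L" "ball z (2 * s) \<subseteq> U"
proof -
  have "U \<subseteq> (\<Union>k::nat. {x. conj_X g x \<le> ereal (real k)})"
  proof
    fix x assume "x \<in> U"
    then obtain v where "conj_X g x = ereal v"
      using assms(3) conj_X_gt_minf[of x] unfolding edom_def by (cases "conj_X g x") auto
    moreover obtain k :: nat where "v \<le> real k" using real_arch_simple by blast
    ultimately show "x \<in> (\<Union>k. {x. conj_X g x \<le> ereal (real k)})" by auto
  qed
  then obtain k z r where "r > 0" and ball: "ball z r \<subseteq> U \<inter> {x. conj_X g x \<le> ereal (real k)}"
    by (rule Baire_closed_cover_ball[OF assms(1,2) closed_conj_X_le])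
  obtain q where "g q < \<infinity>" using proper unfolding proper_fun_def edom_def by blast
  then obtain G where G: "g q = ereal G" using g_gt_minf[of q] by (cases "g q") auto
  have "conj_bounded_on_ball g z (r / 2) (real k) (norm q * (norm z + r) + G)"
  proof unfold_locales
    show "r / 2 > 0" using \<open>r > 0\<close> by simp
    fix x assume x: "x \<in> ball z (2 * (r / 2))"
    then show "conj_X g x \<le> ereal (real k)" using ball by auto
    have "norm x \<le> norm z + r" using x norm_triangle_ineq2[of x z] by (simp add: dist_norm norm_minus_commute)
    then have "norm q * norm x \<le> norm q * (norm z + r)" by (simp add: mult_left_mono)
    moreover have "- blinfun_apply q x \<le> norm q * norm x"
      by (metis abs_le_D2 norm_blinfun real_norm_def)
    ultimately have "- blinfun_apply q x \<le> norm q * (norm z + r)" by linarith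
    then have "ereal (- (norm q * (norm z + r) + G)) \<le> conj_term g x q" using G by simp
    also have "\<dots> \<le> conj_X g x" by (rule conj_term_le_conj_X)
    finally show "ereal (- (norm q * (norm z + r) + G)) \<le> conj_X g x" .
  qed
  moreover have "ball z (2 * (r / 2)) \<subseteq> U" using ball by auto
  ultimately show ?thesis by (rule that)
qed

theorem mainTheorem6:
  fixes g :: "('a::banach \<Rightarrow>\<^sub>L real) \<Rightarrow> ereal"
  assumes "dual_RNP TYPE('a)"
    and "proper_fun g" and "convex_efun g" and "wstar_lsc g"
    and "interior (edom (conj_X g)) \<noteq> {}"
  shows "interior (edom (conj_X g)) \<subseteq> closure (wstar_Exp g)"
proof
  interpret proper_wstar_lsc g using assms(2,4) by unfold_locales
  fix x0 assume x0: "x0 \<in> interior (edom (conj_X g))"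
  show "x0 \<in> closure (wstar_Exp g)" unfolding closure_approachable
  proof (intro allI impI)
    fix e :: real assume "e > 0"
    have "open (interior (edom (conj_X g)) \<inter> ball x0 e)" by blast
    moreover have "interior (edom (conj_X g)) \<inter> ball x0 e \<noteq> {}" using x0 \<open>e > 0\<close> by auto
    moreover have "interior (edom (conj_X g)) \<inter> ball x0 e \<subseteq> edom (conj_X g)"
      using interior_subset by blast
    ultimately obtain z s M L where region: "conj_bounded_on_ball g z s M L"
      and sub: "ball z (2 * s) \<subseteq> interior (edom (conj_X g)) \<inter> ball x0 e"
      by (rule conj_bounded_on_ball_inside)
    interpret conj_bounded_on_ball g z s M L by (fact region)
    obtain x where "x \<in> ball z s" "\<And>n. conj_maximizers_locally_small g (1 / (real n + 1)) x"
      using conj_maximizers_locally_small_residual[OF assms(1)] by blast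
    then have "x \<in> wstar_Exp g" by (rule wstar_Exp_if_conj_maximizers_locally_small)
    moreover have "x \<in> ball x0 e" using \<open>x \<in> ball z s\<close> sub ball_subset_double_ball by blast
    then have "dist x x0 < e" by (simp add: dist_commute)
    ultimately show "\<exists>y\<in>wstar_Exp g. dist y x0 < e" by blast
  qed
qed

end
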